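(* Let $\varepsilon>0$ and let $k\ge2$ be even. There exist a threshold $\theta$, a sequence $Q$ of $k$ counting queries (each of sensitivity $1$), and datasets such that BinarySVT$(\cdot,Q,\theta,\lambda)$ (described below) does not satisfy $\varepsilon$-differential privacy whenever $\lambda\le\frac{k}{4\varepsilon}$.
   Context: $\mathrm{Lap}(\lambda)$ is the Laplace distribution with density $\frac{1}{2\lambda}e^{-|y|/\lambda}$. A dataset is a finite multiset of tuples; two datasets are neighboring if one is obtained by inserting one tuple into the other. A counting query $q$ maps a dataset to the number of its tuples satisfying some predicate. BinarySVT$(D,Q=(q_1,\dots,q_k),\theta,\lambda)$: draw $\hat\theta=\theta+\mathrm{Lap}(\lambda)$ once; then for $i=1,\dots,k$ draw $\hat q_i(D)=q_i(D)+\mathrm{Lap}(\lambda)$ (all noises independent) and output $o_i=1$ if $\hat q_i(D)>\hat\theta$ and $o_i=0$ otherwise. The output is $(o_1,\dots,o_k)$. An algorithm $\mathcal{A}$ is $\varepsilon$-differentially private if for all neighboring $D,D'$ and all outputs $O$, $\Pr[\mathcal{A}(D)=O]\le e^{\varepsilon}\Pr[\mathcal{A}(D')=O]$. *)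

theory Defs
  imports "HOL-Probability.Probability" "HOL-Library.Multiset"
begin

definition lap_density :: "real \<Rightarrow> real \<Rightarrow> real" where
  "lap_density lam y = exp (- \<bar>y\<bar> / lam) / (2 * lam)"

definition laplace :: "real \<Rightarrow> real measure" where
  "laplace lam = density lborel (\<lambda>y. ennreal (lap_density lam y))"

definition neighboring :: "'a multiset \<Rightarrow> 'a multiset \<Rightarrow> bool" where
  "neighboring D D' \<longleftrightarrow> (\<exists>x. D' = add_mset x D) \<or> (\<exists>x. D = add_mset x D')"

definition counting_query :: "('a \<Rightarrow> bool) \<Rightarrow> 'a multiset \<Rightarrow> real" where
  "counting_query P D = real (size (filter_mset P D))"

text \<open>BinarySVT: noise coordinate 0 is the threshold noise, coordinate i+1 is the
  noise of query i (all independent Lap(lambda)). The output is the list (o_1,...,o_k).\<close>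
definition svt_output :: "('a \<Rightarrow> bool) list \<Rightarrow> real \<Rightarrow> 'a multiset \<Rightarrow> (nat \<Rightarrow> real) \<Rightarrow> bool list" where
  "svt_output Q \<theta> D z =
     map (\<lambda>i. counting_query (Q ! i) D + z (Suc i) > \<theta> + z 0) [0..<length Q]"

definition binary_svt :: "'a multiset \<Rightarrow> ('a \<Rightarrow> bool) list \<Rightarrow> real \<Rightarrow> real \<Rightarrow> bool list measure" where
  "binary_svt D Q \<theta> lam =
     distr (PiM {..length Q} (\<lambda>_. laplace lam)) (count_space UNIV) (svt_output Q \<theta> D)"

definition differentially_private :: "('a multiset \<Rightarrow> 'b measure) \<Rightarrow> real \<Rightarrow> bool" where
  "differentially_private A eps \<longleftrightarrow>
     (\<forall>D D' out. neighboring D D' \<longrightarrow> measure (A D) {out} \<le> exp eps * measure (A D') {out})"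

end

(*
  Take k = 2m queries, m counting every tuple and m counting none, threshold 1/2, the empty
  dataset against a one-tuple dataset, and the output (0,...,0,1,...,1).  Given the threshold
  noise y, put t = 1/2 + y and let F be the Laplace CDF: the output then has probability
  (F t * F (-t))^m on the empty dataset and (F (t - 1) * F (-t))^m on the other one.
  The threshold noise is symmetric and y |-> -y sends t to 1 - t, so it suffices that the sum
  of the first probability at t and at 1 - t exceeds 2 e^(m/(2 lam)) times the second one.
  By AM-GM this reduces to F t * F (1 - t) > e^(1/lam) * F (t - 1) * F (-t), an elementary
  property of the Laplace CDF.  Since e^(m/(2 lam)) = e^(k/(4 lam)) >= e^eps, privacy fails.
*)

theory Submission
  imports Defs "HOL-Real_Asymp.Real_Asymp"
begin

definition laplace_cdf :: "real \<Rightarrow> real \<Rightarrow> real" where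
  "laplace_cdf lam s = (if s \<le> 0 then exp (s / lam) / 2 else 1 - exp (- s / lam) / 2)"

lemma lap_density_measurable [measurable]: "lap_density lam \<in> borel_measurable borel"
  unfolding lap_density_def by measurable

lemma laplace_cdf_measurable [measurable]: "laplace_cdf lam \<in> borel_measurable borel"
  unfolding laplace_cdf_def by measurable

lemma sets_laplace [simp, measurable_cong]: "sets (laplace lam) = sets borel"
  and space_laplace [simp]: "space (laplace lam) = UNIV"
  by (simp_all add: laplace_def)

lemma distr_laplace_uminus: "distr (laplace lam) borel uminus = laplace lam"
proof -
  have "distr (laplace lam) borel uminus = distr (laplace lam) lborel uminus"
    by (rule distr_cong) auto
  also have "\<dots> = density lborel ((\<lambda>y. ennreal (lap_density lam y)) \<circ> uminus)"
    unfolding laplace_def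
    by (subst (1) lborel_distr_uminus[symmetric], rule distr_density_distr) auto
  also have "\<dots> = laplace lam"
    by (simp add: laplace_def lap_density_def o_def)
  finally show ?thesis .
qed

lemma integral_laplace_reflect:
  fixes f :: "real \<Rightarrow> real"
  assumes [measurable]: "f \<in> borel_measurable borel"
  shows "(\<integral>y. f (- y) \<partial>laplace lam) = (\<integral>y. f y \<partial>laplace lam)"
  by (subst (2) distr_laplace_uminus[symmetric]) (simp add: integral_distr)

lemma emeasure_laplace_atLeast:
  assumes lam: "lam > 0" and a: "a \<ge> 0"
  shows "emeasure (laplace lam) {a..} = ennreal (exp (- a / lam) / 2)"
proof -
  have "emeasure (laplace lam) {a..} = (\<integral>\<^sup>+y. ennreal (exp (- y / lam) / (2 * lam)) * indicator {a..} y \<partial>lborel)"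
    unfolding laplace_def using a
    by (subst emeasure_density) (auto intro!: nn_integral_cong simp: lap_density_def split: split_indicator)
  also have "\<dots> = ennreal (0 - (- exp (- a / lam) / 2))"
  proof (rule nn_integral_FTC_atLeast)
    show "((\<lambda>x. - exp (- x / lam) / 2) \<longlongrightarrow> 0) at_top"
      using lam by real_asymp
  qed (use lam in \<open>auto intro!: derivative_eq_intros simp: field_simps\<close>)
  finally show ?thesis by simp
qed

lemma emeasure_laplace_singleton: "emeasure (laplace lam) {a} = 0"
  unfolding laplace_def by (simp add: emeasure_density nn_integral_cmult_indicator)

lemma emeasure_laplace_greaterThan:
  assumes "lam > 0" and "a \<ge> 0"
  shows "emeasure (laplace lam) {a<..} = ennreal (exp (- a / lam) / 2)"
proof -
  have "emeasure (laplace lam) {a..} = emeasure (laplace lam) {a} + emeasure (laplace lam) {a<..}"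
    by (subst emeasure_insert[symmetric]) (auto intro!: arg_cong[where f="emeasure _"])
  then show ?thesis
    using emeasure_laplace_atLeast[OF assms] emeasure_laplace_singleton[of lam a] by simp
qed

lemma emeasure_laplace_atMost_neg:
  assumes "lam > 0" and "a \<ge> 0"
  shows "emeasure (laplace lam) {..- a} = ennreal (exp (- a / lam) / 2)"
proof -
  have "emeasure (laplace lam) {..- a} = emeasure (distr (laplace lam) borel uminus) {..- a}"
    by (simp add: distr_laplace_uminus)
  also have "\<dots> = emeasure (laplace lam) {a..}"
    by (simp add: emeasure_distr vimage_def atLeast_def)
  finally show ?thesis
    using emeasure_laplace_atLeast[OF assms] by simp
qed

lemma prob_space_laplace: "lam > 0 \<Longrightarrow> prob_space (laplace lam)"
proof
  assume "lam > 0"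
  have "emeasure (laplace lam) UNIV = emeasure (laplace lam) {..- 0} + emeasure (laplace lam) {0<..}"
    by (subst plus_emeasure) (auto intro!: arg_cong[where f="emeasure _"])
  also have "\<dots> = ennreal (1/2) + ennreal (1/2)"
    using emeasure_laplace_atMost_neg[OF \<open>lam > 0\<close>, of 0] emeasure_laplace_greaterThan[OF \<open>lam > 0\<close>, of 0]
    by simp
  also have "\<dots> = 1"
    by (subst ennreal_plus[symmetric]) auto
  finally show "emeasure (laplace lam) (space (laplace lam)) = 1" by simp
qed

lemma measure_laplace_atMost:
  assumes lam: "lam > 0"
  shows "measure (laplace lam) {..s} = laplace_cdf lam s"
proof (cases "s \<le> 0")
  case True
  then show ?thesis
    using emeasure_laplace_atMost_neg[OF lam, of "- s"] by (simp add: measure_def laplace_cdf_def)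
next
  case False
  interpret prob_space "laplace lam" by (rule prob_space_laplace[OF lam])
  have "measure (laplace lam) {..s} = 1 - measure (laplace lam) {s<..}"
    by (subst prob_compl[symmetric]) (auto intro!: arg_cong[where f="measure _"])
  also have "measure (laplace lam) {s<..} = exp (- s / lam) / 2"
    using False emeasure_laplace_greaterThan[OF lam, of s] by (simp add: measure_def)
  finally show ?thesis
    using False by (simp add: laplace_cdf_def)
qed

lemma measure_laplace_greaterThan:
  assumes lam: "lam > 0"
  shows "measure (laplace lam) {s<..} = 1 - laplace_cdf lam s"
proof -
  interpret prob_space "laplace lam" by (rule prob_space_laplace[OF lam])
  have "{s<..} = space (laplace lam) - {..s}" by auto
  then show ?thesis
    using measure_laplace_atMost[OF lam] by (simp add: prob_compl del: space_laplace)
qed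

lemma laplace_cdf_minus: "laplace_cdf lam (- s) = 1 - laplace_cdf lam s"
  by (auto simp: laplace_cdf_def)

lemma laplace_cdf_pos: "lam > 0 \<Longrightarrow> 0 < laplace_cdf lam s"
  using exp_less_one_iff[of "- (s / lam)"] by (auto simp: laplace_cdf_def simp del: exp_less_one_iff)

lemma laplace_cdf_less_one: "lam > 0 \<Longrightarrow> laplace_cdf lam s < 1"
  using laplace_cdf_pos[of lam "- s"] by (simp add: laplace_cdf_minus)

lemma laplace_cdf_strict_mono:
  assumes lam: "lam > 0" and "a < b"
  shows "laplace_cdf lam a < laplace_cdf lam b"
proof -
  have "exp (a / lam) < exp (b / lam)" and "exp (- (b / lam)) < exp (- (a / lam))"
    using assms by (simp_all add: divide_strict_right_mono)
  moreover have "a \<le> 0 \<Longrightarrow> exp (a / lam) \<le> 1" and "b > 0 \<Longrightarrow> exp (- (b / lam)) < 1"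
    using lam by (simp_all add: divide_nonpos_pos)
  ultimately show ?thesis
    using \<open>a < b\<close> by (auto simp: laplace_cdf_def simp del: exp_le_one_iff exp_less_one_iff)
qed

lemma laplace_cdf_product_gap_le_half:
  assumes lam: "lam > 0" and t: "t \<le> 1/2"
  shows "exp (1 / lam) * laplace_cdf lam (t - 1) * laplace_cdf lam (- t)
           < laplace_cdf lam t * laplace_cdf lam (1 - t)"
proof (cases "t \<le> 0")
  case True
  have "laplace_cdf lam t = exp (1 / lam) * laplace_cdf lam (t - 1)"
    using True by (simp add: laplace_cdf_def diff_divide_distrib exp_diff)
  moreover have "laplace_cdf lam (- t) < laplace_cdf lam (1 - t)"
    using lam by (simp add: laplace_cdf_strict_mono)
  ultimately show ?thesis
    using laplace_cdf_pos[OF lam, of "t - 1"] by simp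
next
  case False
  define x where "x = exp (t / lam)"
  define u where "u = exp (1 / lam)"
  have x: "1 < x" and u: "x\<^sup>2 \<le> u"
    using False lam t by (simp_all add: x_def u_def divide_right_mono flip: exp_of_nat_mult)
  have F: "laplace_cdf lam t = 1 - 1 / (2 * x)" "laplace_cdf lam (- t) = 1 / (2 * x)"
      "laplace_cdf lam (1 - t) = 1 - x / (2 * u)" "laplace_cdf lam (t - 1) = x / (2 * u)"
    using False t by (simp_all add: laplace_cdf_def x_def u_def exp_minus inverse_eq_divide diff_divide_distrib exp_diff)
  have "x * u < (2 * x - 1) * (2 * u - x)"
  proof -
    have "x\<^sup>2 * (3 * x - 2) \<le> u * (3 * x - 2)"
      using u x by (intro mult_right_mono) auto
    moreover have "0 < x * (3 * x - 1) * (x - 1)"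
      using x by simp
    ultimately show ?thesis by (simp add: power2_eq_square algebra_simps)
  qed
  moreover have "0 < u" by (simp add: u_def)
  ultimately show ?thesis
    using x unfolding F u_def[symmetric] by (simp add: field_simps)
qed

lemma laplace_cdf_product_gap:
  assumes lam: "lam > 0"
  shows "exp (1 / lam) * laplace_cdf lam (t - 1) * laplace_cdf lam (- t)
           < laplace_cdf lam t * laplace_cdf lam (1 - t)"
proof (cases "t \<le> 1/2")
  case False
  then have "exp (1 / lam) * laplace_cdf lam ((1 - t) - 1) * laplace_cdf lam (- (1 - t))
               < laplace_cdf lam (1 - t) * laplace_cdf lam (1 - (1 - t))"
    by (intro laplace_cdf_product_gap_le_half[OF lam]) auto
  then show ?thesis by (simp add: mult_ac)
qed (rule laplace_cdf_product_gap_le_half[OF lam])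

lemma twice_less_add_of_square_less_mult:
  fixes a b w :: real
  assumes "0 \<le> a" "0 \<le> b" "w\<^sup>2 < a * b"
  shows "2 * w < a + b"
  using real_less_rsqrt[OF assms(3)] arith_geo_mean_sqrt[OF assms(1,2)] by simp

lemma laplace_cdf_reflected_pair_gap:
  assumes lam: "lam > 0" and m: "m > 0"
  shows "2 * (exp (m / (2 * lam)) * (laplace_cdf lam (t - 1) * laplace_cdf lam (- t)) ^ m)
           < (laplace_cdf lam t * laplace_cdf lam (- t)) ^ m
             + (laplace_cdf lam (1 - t) * laplace_cdf lam (t - 1)) ^ m"
proof (rule twice_less_add_of_square_less_mult)
  let ?F = "laplace_cdf lam"
  have pos: "0 < ?F s" for s
    using lam by (rule laplace_cdf_pos)
  have "exp (1 / lam) * ?F (t - 1) * ?F (- t) * (?F (t - 1) * ?F (- t))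
          < ?F t * ?F (1 - t) * (?F (t - 1) * ?F (- t))"
    using laplace_cdf_product_gap[OF lam] pos by (intro mult_strict_right_mono) auto
  then have "(exp (1 / lam) * (?F (t - 1) * ?F (- t))\<^sup>2) ^ m
               < (?F t * ?F (- t) * (?F (1 - t) * ?F (t - 1))) ^ m"
    using m by (intro power_strict_mono) (auto simp: power2_eq_square mult_ac less_imp_le[OF pos] intro!: mult_nonneg_nonneg)
  moreover have "(exp (m / (2 * lam)))\<^sup>2 = exp (1 / lam) ^ m"
    by (simp flip: exp_of_nat_mult exp_add add: field_simps)
  ultimately show "(exp (m / (2 * lam)) * (?F (t - 1) * ?F (- t)) ^ m)\<^sup>2
      < (?F t * ?F (- t)) ^ m * (?F (1 - t) * ?F (t - 1)) ^ m"
    by (simp add: power_mult_distrib mult.commute[of m] flip: power_mult)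
qed (use laplace_cdf_pos[OF lam] in \<open>auto intro!: zero_le_power mult_nonneg_nonneg less_imp_le\<close>)

lemma integral_laplace_less_by_reflection:
  fixes f g :: "real \<Rightarrow> real"
  assumes lam: "lam > 0"
    and int: "integrable (laplace lam) f" "integrable (laplace lam) g"
    and gap: "\<And>y. 2 * g y < f y + f (- y)"
  shows "(\<integral>y. g y \<partial>laplace lam) < (\<integral>y. f y \<partial>laplace lam)"
proof -
  interpret prob_space "laplace lam" by (rule prob_space_laplace[OF lam])
  have f_borel [measurable]: "f \<in> borel_measurable borel"
    using borel_measurable_integrable[OF int(1)] by (simp add: measurable_def)
  have int_reflect: "integrable (laplace lam) (\<lambda>y. f (- y))"
    using int(1) by (subst (asm) distr_laplace_uminus[symmetric]) (simp add: integrable_distr_eq)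
  have "2 * (\<integral>y. g y \<partial>laplace lam) = (\<integral>y. 2 * g y \<partial>laplace lam)"
    by simp
  also have "\<dots> < (\<integral>y. f y + f (- y) \<partial>laplace lam)"
    using int int_reflect gap emeasure_space_1 by (intro integral_less_AE_space) auto
  also have "\<dots> = 2 * (\<integral>y. f y \<partial>laplace lam)"
    using int(1) int_reflect by (simp add: integral_laplace_reflect)
  finally show ?thesis by simp
qed

lemma emeasure_PiM_threshold_tests:
  fixes M :: "real measure" and k :: nat and c :: "nat \<Rightarrow> real" and b :: "nat \<Rightarrow> bool"
  assumes "sigma_finite_measure M" and sets_M [measurable_cong]: "sets M = sets borel"
  defines "N \<equiv> PiM {..k} (\<lambda>_. M)"
  shows "emeasure N {z \<in> space N. \<forall>i<k. (c i + z (Suc i) > \<theta> + z 0) = b i}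
    = (\<integral>\<^sup>+ y. (\<Prod>i<k. emeasure M {v. (c i + v > \<theta> + y) = b i}) \<partial>M)"
proof -
  interpret product_sigma_finite "\<lambda>_::nat. M"
    using assms(1) by (simp add: product_sigma_finite_def)
  define S where "S = {z \<in> space N. \<forall>i<k. (c i + z (Suc i) > \<theta> + z 0) = b i}"
  define A where "A y i = {v. (c i + v > \<theta> + y) = b i}" for y i
  have coord [measurable]: "(\<lambda>z. z j) \<in> borel_measurable N" if "j \<le> k" for j
    using measurable_component_singleton[of j "{..k}" "\<lambda>_. M"] that
    by (simp add: N_def measurable_def)
  have S_sets: "S \<in> sets N"
  proof -
    have "Measurable.pred N (\<lambda>z. \<forall>i<k. (c i + z (Suc i) > \<theta> + z 0) = b i)"
      by measurable
    then show ?thesis by (simp add: S_def pred_def)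
  qed
  have slice: "indicator S (x(0 := y)) = indicator (Pi\<^sub>E {1..k} (\<lambda>j. A y (j - 1))) x"
    if x: "x \<in> space (PiM {1..k} (\<lambda>_. M))" for x y
  proof -
    have "x(0 := y) \<in> S \<longleftrightarrow> (\<forall>i<k. x (Suc i) \<in> A y i)"
      using x sets_eq_imp_space_eq[OF sets_M]
      by (auto simp: S_def A_def N_def space_PiM PiE_iff extensional_def)
    moreover have "x \<in> Pi\<^sub>E {1..k} (\<lambda>j. A y (j - 1)) \<longleftrightarrow> (\<forall>i<k. x (Suc i) \<in> A y i)"
      using x unfolding space_PiM PiE_iff image_Suc_lessThan[symmetric] by auto
    ultimately show ?thesis by (simp add: indicator_def)
  qed
  have "emeasure N S = (\<integral>\<^sup>+ z. indicator S z \<partial>N)"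
    using S_sets by simp
  also have "\<dots> = (\<integral>\<^sup>+ y. (\<integral>\<^sup>+ x. indicator S (x(0 := y)) \<partial>PiM {1..k} (\<lambda>_. M)) \<partial>M)"
  proof -
    have "{..k} = insert 0 {1..k}" by auto
    moreover have "indicator S \<in> borel_measurable N"
      using S_sets by simp
    ultimately show ?thesis
      unfolding N_def by (simp only:) (rule product_nn_integral_insert_rev, auto)
  qed
  also have "\<dots> = (\<integral>\<^sup>+ y. (\<Prod>j\<in>{1..k}. emeasure M (A y (j - 1))) \<partial>M)"
  proof (intro nn_integral_cong)
    fix y
    have A_sets: "A y i \<in> sets M" for i
      using sets_M by (simp add: A_def)
    have "(\<integral>\<^sup>+ x. indicator S (x(0 := y)) \<partial>PiM {1..k} (\<lambda>_. M))
        = (\<integral>\<^sup>+ x. indicator (Pi\<^sub>E {1..k} (\<lambda>j. A y (j - 1))) x \<partial>PiM {1..k} (\<lambda>_. M))"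
      by (rule nn_integral_cong) (rule slice)
    also have "\<dots> = emeasure (PiM {1..k} (\<lambda>_. M)) (Pi\<^sub>E {1..k} (\<lambda>j. A y (j - 1)))"
      using A_sets by (intro nn_integral_indicator sets_PiM_I_finite) auto
    also have "\<dots> = (\<Prod>j\<in>{1..k}. emeasure M (A y (j - 1)))"
      using A_sets by (simp add: emeasure_PiM)
    finally show "(\<integral>\<^sup>+ x. indicator S (x(0 := y)) \<partial>PiM {1..k} (\<lambda>_. M)) = \<dots>" .
  qed
  also have "\<dots> = (\<integral>\<^sup>+ y. (\<Prod>i<k. emeasure M (A y i)) \<partial>M)"
    by (simp add: prod.atLeast1_atMost_eq)
  finally show ?thesis by (simp add: S_def A_def)
qed

definition laplace_exceeds_prob :: "real \<Rightarrow> real \<Rightarrow> bool \<Rightarrow> real" where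
  "laplace_exceeds_prob lam s b = (if b then laplace_cdf lam (- s) else laplace_cdf lam s)"

lemma laplace_exceeds_prob_measurable [measurable]:
  "(\<lambda>s. laplace_exceeds_prob lam s b) \<in> borel_measurable borel"
  unfolding laplace_exceeds_prob_def by measurable

lemma laplace_exceeds_prob_nonneg: "lam > 0 \<Longrightarrow> 0 \<le> laplace_exceeds_prob lam s b"
  by (simp add: laplace_exceeds_prob_def less_imp_le[OF laplace_cdf_pos])

lemma measure_laplace_exceeds:
  assumes "lam > 0"
  shows "measure (laplace lam) {v. (s < v) = b} = laplace_exceeds_prob lam s b"
proof (cases b)
  case True
  have "{v. (s < v) = b} = {s<..}" using True by auto
  then show ?thesis
    using True measure_laplace_greaterThan[OF assms] by (simp add: laplace_exceeds_prob_def laplace_cdf_minus)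
next
  case False
  have "{v. (s < v) = b} = {..s}" using False by auto
  then show ?thesis
    using False measure_laplace_atMost[OF assms] by (simp add: laplace_exceeds_prob_def)
qed

lemma svt_output_eq_iff:
  "svt_output Q \<theta> D z = out \<longleftrightarrow>
     length out = length Q \<and> (\<forall>i<length Q. (\<theta> + z 0 < counting_query (Q ! i) D + z (Suc i)) = out ! i)"
  unfolding svt_output_def list_eq_iff_nth_eq by (auto simp del: upt_Suc)

lemma measure_binary_svt:
  assumes lam: "lam > 0" and len: "length out = length Q"
  shows "measure (binary_svt D Q \<theta> lam) {out}
    = (\<integral>y. (\<Prod>i<length Q. laplace_exceeds_prob lam (\<theta> + y - counting_query (Q ! i) D) (out ! i)) \<partial>laplace lam)"
proof -
  interpret prob_space "laplace lam" by (rule prob_space_laplace[OF lam])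
  define N where "N = PiM {..length Q} (\<lambda>_. laplace lam)"
  define c where "c i = counting_query (Q ! i) D" for i
  have preimage: "svt_output Q \<theta> D -` {a} \<inter> space N
      = {z \<in> space N. length a = length Q \<and> (\<forall>i<length Q. (c i + z (Suc i) > \<theta> + z 0) = a ! i)}" for a
    by (rule set_eqI) (simp add: svt_output_eq_iff c_def conj_ac)
  have "svt_output Q \<theta> D \<in> measurable N (count_space UNIV)"
    unfolding measurable_count_space_eq2_countable preimage by (simp add: N_def)
  then have "measure (binary_svt D Q \<theta> lam) {out} = measure N (svt_output Q \<theta> D -` {out} \<inter> space N)"
    unfolding binary_svt_def N_def[symmetric] by (intro measure_distr) auto
  also have "\<dots> = enn2real (\<integral>\<^sup>+ y. (\<Prod>i<length Q. emeasure (laplace lam) {v. (c i + v > \<theta> + y) = out ! i}) \<partial>laplace lam)"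
    unfolding preimage measure_def using len
    by (simp add: N_def emeasure_PiM_threshold_tests sigma_finite_measure_axioms)
  also have "\<dots> = enn2real (\<integral>\<^sup>+ y. ennreal (\<Prod>i<length Q. laplace_exceeds_prob lam (\<theta> + y - c i) (out ! i)) \<partial>laplace lam)"
  proof (intro arg_cong[where f=enn2real] nn_integral_cong)
    fix y
    have "emeasure (laplace lam) {v. (c i + v > \<theta> + y) = out ! i}
        = ennreal (laplace_exceeds_prob lam (\<theta> + y - c i) (out ! i))" for i
      using measure_laplace_exceeds[OF lam, of "\<theta> + y - c i" "out ! i"]
      by (simp add: emeasure_eq_measure algebra_simps)
    then show "(\<Prod>i<length Q. emeasure (laplace lam) {v. (c i + v > \<theta> + y) = out ! i})
        = ennreal (\<Prod>i<length Q. laplace_exceeds_prob lam (\<theta> + y - c i) (out ! i))"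
      by (simp add: prod_ennreal laplace_exceeds_prob_nonneg[OF lam])
  qed
  also have "\<dots> = (\<integral>y. (\<Prod>i<length Q. laplace_exceeds_prob lam (\<theta> + y - c i) (out ! i)) \<partial>laplace lam)"
    by (rule integral_eq_nn_integral[symmetric]) (measurable, auto simp: prod_nonneg laplace_exceeds_prob_nonneg[OF lam])
  finally show ?thesis by (simp add: c_def)
qed

lemma prod_lessThan_double_if:
  "(\<Prod>i<m + m. if i < m then a else b) = a ^ m * (b :: 'b :: comm_monoid_mult) ^ m"
proof -
  have "{..<m + m} \<inter> {i. i < m} = {..<m}" and "{..<m + m} \<inter> - {i. i < m} = {m..<m + m}"
    by auto
  then show ?thesis by (simp add: prod.If_cases)
qed

lemma binary_svt_privacy_gap:
  fixes x :: 'a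
  assumes lam: "lam > 0" and m: "m > 0" and eps: "eps \<le> m / (2 * lam)"
  defines "Q \<equiv> replicate m (\<lambda>_::'a. True) @ replicate m (\<lambda>_. False)"
    and "out \<equiv> replicate m False @ replicate m True"
  shows "exp eps * measure (binary_svt {#x#} Q (1/2) lam) {out} < measure (binary_svt {#} Q (1/2) lam) {out}"
proof -
  interpret prob_space "laplace lam" by (rule prob_space_laplace[OF lam])
  let ?F = "laplace_cdf lam"
  have len: "length out = length Q" and len_Q: "length Q = m + m"
    by (simp_all add: Q_def out_def)
  have nth: "Q ! i = (\<lambda>_. i < m)" "out ! i = (\<not> i < m)" if "i < m + m" for i
    using that by (auto simp: Q_def out_def nth_append)
  have integrand: "(\<Prod>i<length Q. laplace_exceeds_prob lam (1/2 + y - counting_query (Q ! i) D) (out ! i))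
      = (?F (1/2 + y - size D) * ?F (- (1/2 + y))) ^ m" for y D
  proof -
    have "(\<Prod>i<length Q. laplace_exceeds_prob lam (1/2 + y - counting_query (Q ! i) D) (out ! i))
        = (\<Prod>i<m + m. if i < m then ?F (1/2 + y - size D) else ?F (- (1/2 + y)))"
      unfolding len_Q
      by (intro prod.cong) (simp_all add: nth counting_query_def laplace_exceeds_prob_def)
    then show ?thesis
      by (simp add: prod_lessThan_double_if power_mult_distrib)
  qed
  define f where "f y = (?F (1/2 + y) * ?F (- (1/2 + y))) ^ m" for y
  define h where "h y = (?F (1/2 + y - 1) * ?F (- (1/2 + y))) ^ m" for y
  define c where "c = exp (m / (2 * lam))"
  have measure_D: "measure (binary_svt {#} Q (1/2) lam) {out} = (\<integral>y. f y \<partial>laplace lam)"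
    using integrand[of _ "{#}"] by (simp add: measure_binary_svt[OF lam len] f_def)
  have measure_D': "measure (binary_svt {#x#} Q (1/2) lam) {out} = (\<integral>y. h y \<partial>laplace lam)"
    using integrand[of _ "{#x#}"] by (simp add: measure_binary_svt[OF lam len] h_def)
  have gap: "2 * (c * h y) < f y + f (- y)" for y
  proof -
    have "1/2 + - y = 1 - (1/2 + y)" and "- (1/2 + - y) = 1/2 + y - 1"
      by simp_all
    then show ?thesis
      using laplace_cdf_reflected_pair_gap[OF lam m, of "1/2 + y"] by (simp only: f_def h_def c_def)
  qed
  have bounds: "0 \<le> ?F s" "?F s \<le> 1" for s
    using laplace_cdf_pos[OF lam] laplace_cdf_less_one[OF lam] by (auto intro: less_imp_le)
  have [measurable]: "f \<in> borel_measurable borel" "h \<in> borel_measurable borel"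
    unfolding f_def h_def by measurable
  have int: "integrable (laplace lam) f" "integrable (laplace lam) h"
    by (auto intro!: integrable_const_bound[where B=1] simp: f_def h_def bounds mult_le_one power_le_one)
  have "c * (\<integral>y. h y \<partial>laplace lam) < (\<integral>y. f y \<partial>laplace lam)"
    using integral_laplace_less_by_reflection[OF lam int(1) integrable_mult_right[OF int(2)] gap] by simp
  moreover have "exp eps * (\<integral>y. h y \<partial>laplace lam) \<le> c * (\<integral>y. h y \<partial>laplace lam)"
    using eps by (intro mult_right_mono integral_nonneg_AE) (auto simp: c_def h_def bounds)
  ultimately show ?thesis
    unfolding measure_D measure_D' by linarith
qed

theorem lemma5:
  fixes eps :: real and k :: nat
  assumes "eps > 0" and "k \<ge> 2" and "even k"
  shows "\<exists>(\<theta>::real) (Q :: ('a \<Rightarrow> bool) list) (D :: 'a multiset) D'.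
           length Q = k \<and> neighboring D D' \<and>
           (\<forall>lam. 0 < lam \<and> lam \<le> real k / (4 * eps) \<longrightarrow>
              \<not> differentially_private (\<lambda>X. binary_svt X Q \<theta> lam) eps \<and>
              (\<exists>out. measure (binary_svt D Q \<theta> lam) {out} > exp eps * measure (binary_svt D' Q \<theta> lam) {out}))"
proof -
  obtain m where k: "k = m + m"
    using \<open>even k\<close> by (metis evenE mult_2)
  with \<open>k \<ge> 2\<close> have m: "m > 0" by simp
  define Q :: "('a \<Rightarrow> bool) list" where "Q = replicate m (\<lambda>_. True) @ replicate m (\<lambda>_. False)"
  define out where "out = replicate m False @ replicate m True"
  define D' :: "'a multiset" where "D' = {#undefined#}"
  have neighboring: "neighboring {#} D'"
    by (simp add: neighboring_def D'_def)
  have gap: "exp eps * measure (binary_svt D' Q (1/2) lam) {out} < measure (binary_svt {#} Q (1/2) lam) {out}"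
    if "0 < lam \<and> lam \<le> real k / (4 * eps)" for lam
  proof -
    have "eps \<le> m / (2 * lam)"
      using that \<open>eps > 0\<close> by (simp add: k field_simps)
    then show ?thesis
      using binary_svt_privacy_gap[of lam m eps] that m by (simp add: Q_def out_def D'_def)
  qed
  show ?thesis
  proof (rule exI[of _ "1/2"], rule exI[of _ Q], rule exI[of _ "{#}"], rule exI[of _ D'], intro conjI allI impI)
    show "length Q = k" by (simp add: Q_def k)
    show "neighboring {#} D'" by (fact neighboring)
  next
    fix lam assume lam: "0 < lam \<and> lam \<le> real k / (4 * eps)"
    then show "\<exists>out. exp eps * measure (binary_svt D' Q (1/2) lam) {out} < measure (binary_svt {#} Q (1/2) lam) {out}"
      using gap by blast
    show "\<not> differentially_private (\<lambda>X. binary_svt X Q (1/2) lam) eps"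
      unfolding differentially_private_def using neighboring gap[OF lam] by (auto simp: not_le)
  qed
qed

end
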